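(* Let $\bar f(x,w):[-1,1]^n\times[-1,1]^m\to\mathbb{R}$, $n,m\ge 1$, be a smooth function of $[x,w]\in[-1,1]^{n+m}$ which is analytic (i.e. extends analytically) on the set of all $[x,w]\in\mathbb{C}^{n+m}$ with $\Re(x_1^2+\cdots+x_n^2+w_1^2+\cdots+w_m^2)\ge -t^2$, for some $t>0$. Then for any $\varepsilon>0$ there exist $h\in\mathbb{Z}^+$ and two Chebyshev polynomials $\bar\phi(x):[-1,1]^n\to\mathbb{R}^{1\times h}$ and $\bar a(w):[-1,1]^m\to\mathbb{R}^{h\times 1}$ such that $$\sup_{[x,w]\in[-1,1]^{n+m}}\|\bar f(x,w) - \bar\phi(x)\bar a(w)\| \le \varepsilon$$ and $h = O\big((\log(1/\varepsilon))^m\big)$.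
   Context: $\Re(\cdot)$ denotes the real part of a complex number. A Chebyshev polynomial here means a (vector of) polynomial(s) expressed as finite sums of products of Chebyshev polynomials $T_k$ in the coordinates. *)

theory Defs
  imports "HOL-Analysis.Analysis"
begin

fun cheb :: "nat \<Rightarrow> real \<Rightarrow> real" where
  "cheb 0 x = 1"
| "cheb (Suc 0) x = x"
| "cheb (Suc (Suc k)) x = 2 * x * cheb (Suc k) x - cheb k x"

definition cube :: "(real^'k) set" where
  "cube = {x. \<forall>i. \<bar>x $ i\<bar> \<le> 1}"

definition cheb_poly :: "(real^'k \<Rightarrow> real) \<Rightarrow> bool" where
  "cheb_poly p \<longleftrightarrow> (\<exists>K c. finite K \<and>
     (\<forall>x\<in>cube. p x = (\<Sum>\<kappa>\<in>K. c \<kappa> * (\<Prod>i\<in>UNIV. cheb (\<kappa> i) (x $ i)))))"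

definition cmul :: "complex \<Rightarrow> (complex^'n) \<times> (complex^'m) \<Rightarrow> (complex^'n) \<times> (complex^'m)" where
  "cmul c p = ((\<chi> i. c * fst p $ i), (\<chi> j. c * snd p $ j))"

text \<open>Holomorphy in several complex variables on a set U (used with U open):
  Frechet differentiable at each point with complex-linear derivative.\<close>
definition cholomorphic_on ::
  "((complex^'n) \<times> (complex^'m) \<Rightarrow> complex) \<Rightarrow> ((complex^'n) \<times> (complex^'m)) set \<Rightarrow> bool" where
  "cholomorphic_on F U \<longleftrightarrow>
     (\<forall>p\<in>U. \<exists>D. (F has_derivative D) (at p) \<and> (\<forall>v. D (cmul \<i> v) = \<i> * D v))"

definition region :: "real \<Rightarrow> ((complex^'n) \<times> (complex^'m)) set" where
  "region t = {(z, u). Re ((\<Sum>i\<in>UNIV. (z $ i)^2) + (\<Sum>j\<in>UNIV. (u $ j)^2)) \<ge> - (t^2)}"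

definition cemb :: "real^'k \<Rightarrow> complex^'k" where
  "cemb x = (\<chi> i. complex_of_real (x $ i))"

definition analytic_ext :: "real \<Rightarrow> (real^'n \<Rightarrow> real^'m \<Rightarrow> real) \<Rightarrow> bool" where
  "analytic_ext t f \<longleftrightarrow> (\<exists>F U. open U \<and> region t \<subseteq> U \<and> cholomorphic_on F U \<and>
     (\<forall>x\<in>cube. \<forall>w\<in>cube. F (cemb x, cemb w) = complex_of_real (f x w)))"

text \<open>Separable Chebyshev approximation of rank h within eps:
  phi(x) in R^{1 x h}, a(w) in R^{h x 1}, product = sum_j phi_j(x) a_j(w).\<close>
definition cheb_sep_approx :: "(real^'n \<Rightarrow> real^'m \<Rightarrow> real) \<Rightarrow> real \<Rightarrow> nat \<Rightarrow> bool" where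
  "cheb_sep_approx f eps h \<longleftrightarrow> h \<ge> 1 \<and>
     (\<exists>(\<phi> :: nat \<Rightarrow> real^'n \<Rightarrow> real) (a :: nat \<Rightarrow> real^'m \<Rightarrow> real).
        (\<forall>j<h. cheb_poly (\<phi> j)) \<and> (\<forall>j<h. cheb_poly (a j)) \<and>
        (\<forall>x\<in>cube. \<forall>w\<in>cube. \<bar>f x w - (\<Sum>j<h. \<phi> j x * a j w)\<bar> \<le> eps))"

end

theory Submission
  imports Defs "HOL-Complex_Analysis.Complex_Analysis"
begin

text \<open>For \<open>g\<close> holomorphic near \<open>[-1, 1]\<close>, Cauchy's formula on the boundary of the
  rectangle \<open>[-1-\<eta>, 1+\<eta>] \<times> [-\<eta>, \<eta>]\<close> writes \<open>g w\<close> as an integral of \<open>g z / (z - w)\<close>. On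
  each side, \<open>1 / (z - w) = a / (1 - (1 - a (z - w)))\<close> for a suitable \<open>a\<close> of modulus \<open>\<eta> / 16\<close>,
  and for \<open>w \<in> [-1, 1]\<close> the ratio has modulus at most \<open>q = sqrt (1 - \<eta>\<^sup>2 / 16) < 1\<close>;
  truncating the geometric series after \<open>d\<close> terms replaces \<open>g\<close> by a polynomial of degree
  \<open>< d\<close> with error \<open>O (q\<^sup>d)\<close>. The extension of \<open>f\<close> is holomorphic near every real point,
  hence (by compactness) on a product of such rectangles, and applying the one-variable step to
  one coordinate after the other approximates \<open>f\<close> by a polynomial of degree \<open>< d\<close> in each of
  the \<open>n + m\<close> variables, again with error \<open>O (q\<^sup>d)\<close>. Grouping its terms by their exponents in
  \<open>w\<close> gives a separable approximation of rank \<open>d\<^sup>m\<close>, and \<open>d \<sim> log (1 / \<epsilon>)\<close> gives the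
  bound on \<open>h\<close>. Only the real points of the region \<open>Re (\<Sum> z\<^sub>i\<^sup>2) \<ge> -t\<^sup>2\<close> are used.\<close>

section \<open>Chebyshev polynomials\<close>

definition cheb_monomial :: "('k \<Rightarrow> nat) \<Rightarrow> real^'k \<Rightarrow> real" where
  "cheb_monomial \<kappa> x = (\<Prod>i\<in>UNIV. cheb (\<kappa> i) (x $ i))"

lemma cheb_poly_iff:
  "cheb_poly p \<longleftrightarrow> (\<exists>K c. finite K \<and> (\<forall>x\<in>cube. p x = (\<Sum>\<kappa>\<in>K. c \<kappa> * cheb_monomial \<kappa> x)))"
  by (simp add: cheb_poly_def cheb_monomial_def)

lemma cheb_poly_cong: "cheb_poly p \<Longrightarrow> (\<And>x. x \<in> cube \<Longrightarrow> p x = q x) \<Longrightarrow> cheb_poly q"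
  unfolding cheb_poly_def by auto

lemma cheb_poly_cheb_monomial: "cheb_poly (cheb_monomial \<kappa>)"
  unfolding cheb_poly_iff by (rule exI[of _ "{\<kappa>}"], rule exI[of _ "\<lambda>_. 1"]) auto

lemma cheb_poly_zero: "cheb_poly (\<lambda>x. 0)"
  unfolding cheb_poly_def by (rule exI[of _ "{}"]) auto

lemma cheb_poly_one: "cheb_poly (\<lambda>x. 1)"
  by (rule cheb_poly_cong[OF cheb_poly_cheb_monomial[of "\<lambda>_. 0"]]) (simp add: cheb_monomial_def)

lemma cheb_poly_cmult: "cheb_poly p \<Longrightarrow> cheb_poly (\<lambda>x. c * p x)"
  unfolding cheb_poly_iff
  by (elim exE conjE, rule exI, rule exI[of _ "\<lambda>\<kappa>. c * _ \<kappa>"])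
     (auto simp: sum_distrib_left mult.assoc)

lemma cheb_poly_add:
  assumes "cheb_poly p" "cheb_poly q"
  shows "cheb_poly (\<lambda>x. p x + q x)"
proof -
  obtain K1 c1 where K1: "finite K1" "\<forall>x\<in>cube. p x = (\<Sum>\<kappa>\<in>K1. c1 \<kappa> * cheb_monomial \<kappa> x)"
    using assms(1) unfolding cheb_poly_iff by blast
  obtain K2 c2 where K2: "finite K2" "\<forall>x\<in>cube. q x = (\<Sum>\<kappa>\<in>K2. c2 \<kappa> * cheb_monomial \<kappa> x)"
    using assms(2) unfolding cheb_poly_iff by blast
  have extend: "(\<Sum>\<kappa>\<in>K1 \<union> K2. (if \<kappa> \<in> K then c \<kappa> else 0) * cheb_monomial \<kappa> x)
      = (\<Sum>\<kappa>\<in>K. c \<kappa> * cheb_monomial \<kappa> x)" if "K = K1 \<or> K = K2" for K c x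
    by (rule sum.mono_neutral_cong_right) (use K1 K2 that in auto)
  show ?thesis
    unfolding cheb_poly_iff
  proof (intro exI conjI ballI)
    show "finite (K1 \<union> K2)" using K1 K2 by simp
    fix x :: "real^'a" assume "x \<in> cube"
    then show "p x + q x = (\<Sum>\<kappa>\<in>K1 \<union> K2.
        ((if \<kappa> \<in> K1 then c1 \<kappa> else 0) + (if \<kappa> \<in> K2 then c2 \<kappa> else 0)) * cheb_monomial \<kappa> x)"
      using K1(2) K2(2) extend by (simp add: distrib_right sum.distrib)
  qed
qed

lemma cheb_poly_sum:
  "finite A \<Longrightarrow> (\<And>a. a \<in> A \<Longrightarrow> cheb_poly (p a)) \<Longrightarrow> cheb_poly (\<lambda>x. \<Sum>a\<in>A. p a x)"
  by (induction A rule: finite_induct) (auto intro: cheb_poly_add cheb_poly_zero)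

lemma cheb_monomial_fun_upd:
  "cheb_monomial (\<kappa>(a := k)) x = cheb k (x $ a) * (\<Prod>i\<in>UNIV - {a}. cheb (\<kappa> i) (x $ i))"
  unfolding cheb_monomial_def by (subst prod.remove[of _ a]) (auto intro: prod.cong)

lemma cheb_poly_coord_mult_cheb_monomial: "cheb_poly (\<lambda>x. x $ a * cheb_monomial \<kappa> x)"
proof (cases "\<kappa> a")
  case 0
  then have "x $ a * cheb_monomial \<kappa> x = cheb_monomial (\<kappa>(a := 1)) x" for x
    using cheb_monomial_fun_upd[of \<kappa> a 0 x] by (simp add: cheb_monomial_fun_upd fun_upd_idem)
  then show ?thesis using cheb_poly_cheb_monomial by simp
next
  case (Suc k)
  then have "x $ a * cheb_monomial \<kappa> x
      = 1/2 * cheb_monomial (\<kappa>(a := Suc (Suc k))) x + 1/2 * cheb_monomial (\<kappa>(a := k)) x" for x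
    using cheb_monomial_fun_upd[of \<kappa> a "Suc k" x]
    by (simp add: cheb_monomial_fun_upd fun_upd_idem algebra_simps)
  then show ?thesis
    by (simp only: cheb_poly_add cheb_poly_cmult cheb_poly_cheb_monomial)
qed

lemma cheb_poly_coord_mult: "cheb_poly p \<Longrightarrow> cheb_poly (\<lambda>x. x $ a * p x)"
proof -
  assume "cheb_poly p"
  then obtain K c where K: "finite K" "\<forall>x\<in>cube. p x = (\<Sum>\<kappa>\<in>K. c \<kappa> * cheb_monomial \<kappa> x)"
    unfolding cheb_poly_iff by blast
  have "cheb_poly (\<lambda>x. \<Sum>\<kappa>\<in>K. c \<kappa> * (x $ a * cheb_monomial \<kappa> x))"
    by (intro cheb_poly_sum K(1) cheb_poly_cmult cheb_poly_coord_mult_cheb_monomial)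
  then show ?thesis
    by (rule cheb_poly_cong) (simp add: K(2) sum_distrib_left algebra_simps)
qed

lemma cheb_poly_monomial: "cheb_poly (\<lambda>x::real^'a. \<Prod>i\<in>UNIV. (x $ i) ^ \<alpha> i)"
proof -
  have "cheb_poly (\<lambda>x::real^'a. \<Prod>i\<in>A. (x $ i) ^ \<alpha> i)" if "finite A" for A
    using that
  proof (induction A rule: finite_induct)
    case empty
    then show ?case using cheb_poly_one by simp
  next
    case (insert a A)
    have "cheb_poly (\<lambda>x. (x $ a) ^ k * (\<Prod>i\<in>A. (x $ i) ^ \<alpha> i))" for k
      by (induction k) (simp_all add: insert.IH cheb_poly_coord_mult mult.assoc)
    then show ?case using insert.hyps by simp
  qed
  then show ?thesis by simp
qed

section \<open>Separable approximations\<close>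

lemma cheb_sep_approx_mono:
  assumes "cheb_sep_approx f e1 h" "e1 \<le> e2"
  shows "cheb_sep_approx f e2 h"
  using assms unfolding cheb_sep_approx_def by (blast intro: order_trans)

lemma cheb_sep_approx_finite_index:
  fixes f :: "real^'n \<Rightarrow> real^'m \<Rightarrow> real"
    and \<phi> :: "'r \<Rightarrow> real^'n \<Rightarrow> real" and a :: "'r \<Rightarrow> real^'m \<Rightarrow> real"
  assumes "finite R" "R \<noteq> {}" "\<And>\<rho>. \<rho> \<in> R \<Longrightarrow> cheb_poly (\<phi> \<rho>)" "\<And>\<rho>. \<rho> \<in> R \<Longrightarrow> cheb_poly (a \<rho>)"
    and err: "\<And>x w. x \<in> cube \<Longrightarrow> w \<in> cube \<Longrightarrow> \<bar>f x w - (\<Sum>\<rho>\<in>R. \<phi> \<rho> x * a \<rho> w)\<bar> \<le> eps"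
  shows "cheb_sep_approx f eps (card R)"
proof -
  obtain g where g: "bij_betw g {..<card R} R"
    using ex_bij_betw_nat_finite[OF assms(1)] lessThan_atLeast0 by metis
  then have gR: "g j \<in> R" if "j < card R" for j
    using that bij_betwE by blast
  show ?thesis
    unfolding cheb_sep_approx_def
  proof (intro conjI exI[of _ "\<phi> \<circ> g"] exI[of _ "a \<circ> g"] allI impI ballI)
    show "1 \<le> card R" using assms(1,2) by (simp add: Suc_le_eq card_gt_0_iff)
    show "cheb_poly ((\<phi> \<circ> g) j)" "cheb_poly ((a \<circ> g) j)" if "j < card R" for j
      using assms(3,4) gR[OF that] by simp_all
    fix x :: "real^'n" and w :: "real^'m" assume "x \<in> cube" "w \<in> cube"
    then show "\<bar>f x w - (\<Sum>j<card R. (\<phi> \<circ> g) j x * (a \<circ> g) j w)\<bar> \<le> eps"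
      using err sum.reindex_bij_betw[OF g, of "\<lambda>\<rho>. \<phi> \<rho> x * a \<rho> w"] by simp
  qed
qed

definition join_vec :: "'a^'n \<Rightarrow> 'a^'m \<Rightarrow> 'a^('n + 'm)" where
  "join_vec x w = (\<chi> i. case_sum (\<lambda>a. x $ a) (\<lambda>b. w $ b) i)"

lemma join_vec_nth [simp]:
  "join_vec x w $ Inl a = x $ a" "join_vec x w $ Inr b = w $ b"
  by (simp_all add: join_vec_def)

lemma prod_join_vec_power:
  "(\<Prod>i\<in>UNIV. (join_vec x w $ i) ^ \<kappa> i) =
     (\<Prod>a\<in>UNIV. (x $ a) ^ \<kappa> (Inl a)) * (\<Prod>b\<in>UNIV. (w $ b) ^ \<kappa> (Inr b))"
  by (simp add: UNIV_Plus_UNIV[symmetric] prod.Plus del: UNIV_Plus_UNIV)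

lemma sum_PiE_Plus:
  fixes g :: "('a::finite + 'b::finite \<Rightarrow> 'c) \<Rightarrow> 'd::comm_monoid_add"
  shows "(\<Sum>\<kappa>\<in>PiE UNIV (\<lambda>_. A). g \<kappa>) =
     (\<Sum>\<beta>\<in>PiE UNIV (\<lambda>_. A). \<Sum>\<alpha>\<in>PiE UNIV (\<lambda>_. A). g (case_sum \<alpha> \<beta>))"
proof -
  have bij: "bij_betw (\<lambda>(\<beta>, \<alpha>). case_sum \<alpha> \<beta>)
      (PiE UNIV (\<lambda>_. A) \<times> PiE UNIV (\<lambda>_. A)) (PiE UNIV (\<lambda>_. A))"
  proof (rule bij_betw_byWitness[where f' = "\<lambda>\<kappa>. (\<kappa> \<circ> Inr, \<kappa> \<circ> Inl)"])
  qed (auto simp: PiE_UNIV_domain Pi_iff fun_eq_iff split: sum.split)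
  show ?thesis
    by (simp add: sum.reindex_bij_betw[OF bij, symmetric] sum.cartesian_product case_prod_unfold)
qed

lemma cheb_sep_approx_of_poly:
  fixes f :: "real^'n \<Rightarrow> real^'m \<Rightarrow> real" and c :: "('n + 'm \<Rightarrow> nat) \<Rightarrow> real"
  assumes "1 \<le> d"
    and err: "\<And>x w. x \<in> cube \<Longrightarrow> w \<in> cube \<Longrightarrow>
      \<bar>f x w - (\<Sum>\<kappa>\<in>PiE UNIV (\<lambda>_. {..<d}). c \<kappa> * (\<Prod>i\<in>UNIV. (join_vec x w $ i) ^ \<kappa> i))\<bar> \<le> eps"
  shows "cheb_sep_approx f eps (d ^ CARD('m))"
proof -
  define R where "R = PiE (UNIV :: 'm set) (\<lambda>_. {..<d})"
  define \<phi> where "\<phi> \<beta> x = (\<Sum>\<alpha>\<in>PiE UNIV (\<lambda>_. {..<d}). c (case_sum \<alpha> \<beta>) * (\<Prod>a\<in>UNIV. (x $ a) ^ \<alpha> a))"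
    for \<beta> and x :: "real^'n"
  define a where "a \<beta> w = (\<Prod>b\<in>UNIV. (w $ b) ^ \<beta> b)" for \<beta> and w :: "real^'m"
  have "card R = d ^ CARD('m)"
    by (simp add: R_def card_PiE)
  moreover have "cheb_sep_approx f eps (card R)"
  proof (rule cheb_sep_approx_finite_index)
    show "finite R" by (simp add: R_def finite_PiE)
    show "R \<noteq> {}" using assms(1) by (auto simp: R_def PiE_eq_empty_iff lessThan_empty_iff)
    show "cheb_poly (\<phi> \<beta>)" "cheb_poly (a \<beta>)" for \<beta>
      unfolding \<phi>_def a_def
      by (intro cheb_poly_sum cheb_poly_cmult cheb_poly_monomial finite_PiE; simp)+
    fix x :: "real^'n" and w :: "real^'m" assume "x \<in> cube" "w \<in> cube"
    then show "\<bar>f x w - (\<Sum>\<beta>\<in>R. \<phi> \<beta> x * a \<beta> w)\<bar> \<le> eps"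
      using err by (simp add: sum_PiE_Plus prod_join_vec_power R_def \<phi>_def a_def
          sum_distrib_right mult.assoc comp_def)
  qed
  ultimately show ?thesis by simp
qed

section \<open>A rectangle around \<open>[-1, 1]\<close> and the truncated Cauchy kernel\<close>

definition rect :: "real \<Rightarrow> complex set" where
  "rect \<eta> = {z. \<bar>Re z\<bar> \<le> 1 + \<eta> \<and> \<bar>Im z\<bar> \<le> \<eta>}"

definition corner :: "real \<Rightarrow> nat \<Rightarrow> complex" where
  "corner \<eta> s = (if s = 0 then Complex (-(1 + \<eta>)) (-\<eta>) else if s = 1 then Complex (1 + \<eta>) (-\<eta>)
     else if s = 2 then Complex (1 + \<eta>) \<eta> else Complex (-(1 + \<eta>)) \<eta>)"

definition side :: "real \<Rightarrow> nat \<Rightarrow> real \<Rightarrow> complex" where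
  "side \<eta> s = linepath (corner \<eta> s) (corner \<eta> (Suc s mod 4))"

text \<open>The conjugate of the outward unit normal of side \<open>s\<close>, so that \<open>Re (side_normal s * y)\<close>
  is the outward component of \<open>y\<close>.\<close>
definition side_normal :: "nat \<Rightarrow> complex" where
  "side_normal s = (if s = 0 then \<i> else if s = 1 then 1 else if s = 2 then -\<i> else -1)"

lemma mem_side_cases:
  assumes "s < 4" "z \<in> path_image (side \<eta> s)" "0 < \<eta>"
  shows "z \<in> rect \<eta> \<and> (s = 0 \<and> Im z = -\<eta> \<or> s = 1 \<and> Re z = 1 + \<eta> \<or>
    s = 2 \<and> Im z = \<eta> \<or> s = 3 \<and> Re z = -(1 + \<eta>))"
proof -
  have "s = 0 \<or> s = 1 \<or> s = 2 \<or> s = 3" using assms(1) by auto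
  then show ?thesis
    using assms(2,3)
    by (auto simp: side_def corner_def rect_def closed_segment_same_Im closed_segment_same_Re
        closed_segment_eq_real_ivl split: if_splits)
qed

lemma side_subset_rect: "s < 4 \<Longrightarrow> 0 < \<eta> \<Longrightarrow> path_image (side \<eta> s) \<subseteq> rect \<eta>"
  using mem_side_cases by blast

lemma side_normal_component_ge:
  assumes "s < 4" "z \<in> path_image (side \<eta> s)" "0 < \<eta>" "\<bar>r\<bar> \<le> 1"
  shows "\<eta> \<le> Re (side_normal s * (z - of_real r))"
  using mem_side_cases[OF assms(1-3)] assms(4) by (auto simp: side_normal_def rect_def)

lemma norm_side_normal: "s < 4 \<Longrightarrow> cmod (side_normal s) = 1"
  by (auto simp: side_normal_def)

lemma norm_side_minus_real_ge:
  assumes "s < 4" "z \<in> path_image (side \<eta> s)" "0 < \<eta>" "\<bar>r\<bar> \<le> 1"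
  shows "\<eta> \<le> cmod (z - of_real r)"
proof -
  have "\<eta> \<le> Re (side_normal s * (z - of_real r))" by (rule side_normal_component_ge[OF assms])
  also have "\<dots> \<le> cmod (side_normal s * (z - of_real r))" by (rule complex_Re_le_cmod)
  finally show ?thesis using norm_side_normal[OF assms(1)] by (simp add: norm_mult)
qed

lemma norm_rect_minus_real_le:
  assumes "z \<in> rect \<eta>" "\<eta> \<le> 1" "\<bar>r\<bar> \<le> 1"
  shows "cmod (z - of_real r) \<le> 4"
proof -
  have "cmod (z - of_real r) \<le> \<bar>Re (z - of_real r)\<bar> + \<bar>Im (z - of_real r)\<bar>" by (rule cmod_le)
  also have "\<dots> \<le> (\<bar>Re z\<bar> + \<bar>r\<bar>) + \<bar>Im z\<bar>" using abs_triangle_ineq4[of "Re z" r] by simp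
  also have "\<dots> \<le> 4" using assms by (simp add: rect_def)
  finally show ?thesis .
qed

definition contraction_rate :: "real \<Rightarrow> real" where
  "contraction_rate \<eta> = sqrt (1 - \<eta>^2 / 16)"

lemma contraction_rate_bounds:
  assumes "0 < \<eta>" "\<eta> \<le> 1"
  shows "0 < contraction_rate \<eta>" "contraction_rate \<eta> < 1"
proof -
  have "\<eta>^2 \<le> 1" using assms by (simp add: power_le_one)
  then show "0 < contraction_rate \<eta>" "contraction_rate \<eta> < 1"
    using assms(1) by (simp_all add: contraction_rate_def)
qed

lemma norm_one_minus_contraction_le:
  fixes u y :: complex
  assumes "\<eta> \<le> Re (u * y)" "cmod y \<le> 4" "cmod u = 1" "0 \<le> \<eta>"
  shows "cmod (1 - of_real (\<eta> / 16) * (u * y)) \<le> contraction_rate \<eta>"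
proof -
  define p where "p = u * y"
  have "(cmod p)^2 \<le> 16"
    using assms(2,3) power_mono[of "cmod p" 4 2] by (simp add: p_def norm_mult)
  then have p16: "(Re p)^2 + (Im p)^2 \<le> 16" by (simp add: cmod_power2)
  have "(cmod (1 - of_real (\<eta> / 16) * p))^2 = (1 - \<eta> / 16 * Re p)^2 + (\<eta> / 16 * Im p)^2"
    by (simp add: cmod_power2)
  also have "\<dots> = 1 - \<eta> / 8 * Re p + (\<eta> / 16)^2 * ((Re p)^2 + (Im p)^2)"
    by (simp add: power2_eq_square algebra_simps)
  also have "\<dots> \<le> 1 - \<eta> / 8 * \<eta> + (\<eta> / 16)^2 * 16"
    using assms(1,4) p16 by (intro add_mono diff_mono mult_left_mono) (auto simp: p_def)
  also have "\<dots> = 1 - \<eta>^2 / 16" by (simp add: power2_eq_square)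
  finally show ?thesis
    by (simp add: contraction_rate_def real_le_rsqrt p_def)
qed

definition kernel_step :: "real \<Rightarrow> nat \<Rightarrow> complex" where
  "kernel_step \<eta> s = of_real (\<eta> / 16) * side_normal s"

text \<open>With \<open>a = kernel_step \<eta> s\<close>, the truncation of \<open>1 / (z - w) = a / (1 - (1 - a (z - w)))\<close>
  to \<open>d\<close> terms of the geometric series; for \<open>z\<close> on side \<open>s\<close> and \<open>w \<in> [-1, 1]\<close> the ratio has
  modulus at most \<open>contraction_rate \<eta>\<close>.\<close>
definition cauchy_kernel :: "nat \<Rightarrow> real \<Rightarrow> nat \<Rightarrow> complex \<Rightarrow> complex \<Rightarrow> complex" where
  "cauchy_kernel d \<eta> s z w = kernel_step \<eta> s * (\<Sum>k<d. (1 - kernel_step \<eta> s * (z - w))^k)"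

definition cauchy_kernel_coeff :: "nat \<Rightarrow> real \<Rightarrow> nat \<Rightarrow> nat \<Rightarrow> complex \<Rightarrow> complex" where
  "cauchy_kernel_coeff d \<eta> s l z =
     (\<Sum>k\<in>{l..<d}. kernel_step \<eta> s ^ (l + 1) * of_nat (k choose l) *
        (1 - kernel_step \<eta> s * z)^(k - l))"

lemma truncated_geometric_inverse:
  fixes a y :: "'a::field"
  assumes "a \<noteq> 0" "y \<noteq> 0"
  shows "a * (\<Sum>k<d. (1 - a * y)^k) = (1 - (1 - a * y)^d) / y"
  using assms by (simp add: sum_gp_strict field_simps)

lemma geometric_sum_expand:
  fixes a z w :: "'a::comm_ring_1"
  shows "a * (\<Sum>k<d. (1 - a * (z - w))^k) =
    (\<Sum>l<d. (\<Sum>k\<in>{l..<d}. a^(l + 1) * of_nat (k choose l) * (1 - a * z)^(k - l)) * w^l)"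
proof -
  define t where "t k l = a^(l + 1) * of_nat (k choose l) * (1 - a * z)^(k - l) * w^l" for k l
  have "a * (1 - a * (z - w))^k = (\<Sum>l\<le>k. t k l)" for k
  proof -
    have "a * (1 - a * (z - w))^k = a * (a * w + (1 - a * z))^k" by (simp add: algebra_simps)
    also have "\<dots> = (\<Sum>l\<le>k. t k l)"
      unfolding binomial_ring sum_distrib_left t_def
      by (intro sum.cong) (simp_all add: power_mult_distrib mult_ac)
    finally show ?thesis .
  qed
  then have "a * (\<Sum>k<d. (1 - a * (z - w))^k) = (\<Sum>k<d. \<Sum>l\<in>{l. l \<in> {..<d} \<and> l \<le> k}. t k l)"
    by (auto simp: sum_distrib_left intro!: sum.cong)
  also have "\<dots> = (\<Sum>l<d. \<Sum>k\<in>{k. k \<in> {..<d} \<and> l \<le> k}. t k l)"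
    by (rule sum.swap_restrict) auto
  also have "\<dots> = (\<Sum>l<d. (\<Sum>k\<in>{l..<d}. a^(l + 1) * of_nat (k choose l) * (1 - a * z)^(k - l)) * w^l)"
    by (auto simp: t_def sum_distrib_right intro!: sum.cong)
  finally show ?thesis .
qed

lemma cauchy_kernel_poly: "cauchy_kernel d \<eta> s z w = (\<Sum>l<d. cauchy_kernel_coeff d \<eta> s l z * w^l)"
  unfolding cauchy_kernel_def cauchy_kernel_coeff_def by (rule geometric_sum_expand)

lemma continuous_on_cauchy_kernel: "continuous_on A (\<lambda>z. cauchy_kernel d \<eta> s z w)"
  unfolding cauchy_kernel_def by (intro continuous_intros)

lemma continuous_on_cauchy_kernel_coeff: "continuous_on A (cauchy_kernel_coeff d \<eta> s l)"
  unfolding cauchy_kernel_coeff_def by (intro continuous_intros)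

lemma cauchy_kernel_on_side:
  assumes "s < 4" "z \<in> path_image (side \<eta> s)" "0 < \<eta>" "\<eta> \<le> 1" "\<bar>r\<bar> \<le> 1"
  defines "q \<equiv> 1 - kernel_step \<eta> s * (z - of_real r)"
  shows "cauchy_kernel d \<eta> s z (of_real r) = (1 - q^d) / (z - of_real r)"
    and "cmod q \<le> contraction_rate \<eta>"
proof -
  have "kernel_step \<eta> s \<noteq> 0"
    using assms(3) norm_side_normal[OF assms(1)] by (auto simp: kernel_step_def)
  moreover have "z - of_real r \<noteq> 0" using norm_side_minus_real_ge[OF assms(1-3,5)] assms(3) by auto
  ultimately show "cauchy_kernel d \<eta> s z (of_real r) = (1 - q^d) / (z - of_real r)"
    unfolding cauchy_kernel_def q_def by (rule truncated_geometric_inverse)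
  have "cmod (z - of_real r) \<le> 4"
    using side_subset_rect[OF assms(1,3)] assms(2,4,5) norm_rect_minus_real_le by blast
  then show "cmod q \<le> contraction_rate \<eta>"
    unfolding q_def kernel_step_def mult.assoc
    using norm_one_minus_contraction_le side_normal_component_ge[OF assms(1,2,3,5)]
      norm_side_normal[OF assms(1)] assms(3) by simp
qed

lemma cauchy_kernel_error:
  assumes "s < 4" "z \<in> path_image (side \<eta> s)" "0 < \<eta>" "\<eta> \<le> 1" "\<bar>r\<bar> \<le> 1"
  shows "cmod (1 / (z - of_real r) - cauchy_kernel d \<eta> s z (of_real r))
    \<le> contraction_rate \<eta> ^ d / \<eta>"
proof -
  define q where "q = 1 - kernel_step \<eta> s * (z - of_real r)"
  have y: "\<eta> \<le> cmod (z - of_real r)" by (rule norm_side_minus_real_ge[OF assms(1-3,5)])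
  have "1 / (z - of_real r) - cauchy_kernel d \<eta> s z (of_real r) = q^d / (z - of_real r)"
    unfolding cauchy_kernel_on_side(1)[OF assms] q_def[symmetric] diff_divide_distrib[symmetric]
    by simp
  also have "cmod \<dots> \<le> contraction_rate \<eta> ^ d / \<eta>"
    unfolding norm_divide norm_power
    using cauchy_kernel_on_side(2)[OF assms] y assms(3) contraction_rate_bounds[OF assms(3,4)]
    by (intro frac_le power_mono) (auto simp: q_def)
  finally show ?thesis .
qed

lemma norm_cauchy_kernel_le:
  assumes "s < 4" "z \<in> path_image (side \<eta> s)" "0 < \<eta>" "\<eta> \<le> 1" "\<bar>r\<bar> \<le> 1"
  shows "cmod (cauchy_kernel d \<eta> s z (of_real r)) \<le> 2 / \<eta>"
proof -
  define q where "q = 1 - kernel_step \<eta> s * (z - of_real r)"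
  have "cmod q ^ d \<le> 1"
    using cauchy_kernel_on_side(2)[OF assms] contraction_rate_bounds[OF assms(3,4)]
    by (intro power_le_one) (auto simp: q_def)
  then have "cmod (1 - q^d) \<le> 2"
    using norm_triangle_ineq4[of 1 "q^d"] by (simp add: norm_power)
  then show ?thesis
    unfolding cauchy_kernel_on_side(1)[OF assms] norm_divide q_def[symmetric]
    using norm_side_minus_real_ge[OF assms(1-3,5)] assms(3) by (intro frac_le) auto
qed

section \<open>Contour integrals over the rectangle\<close>

definition rect_integral :: "real \<Rightarrow> (nat \<Rightarrow> complex \<Rightarrow> complex) \<Rightarrow> complex" where
  "rect_integral \<eta> h = (\<Sum>s<4. contour_integral (side \<eta> s) (h s)) / (2 * pi * \<i>)"

lemma contour_integrable_side:
  assumes "continuous_on (rect \<eta>) g" "s < 4" "0 < \<eta>"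
  shows "g contour_integrable_on side \<eta> s"
  using continuous_on_subset[OF assms(1) side_subset_rect[OF assms(2,3)]]
  by (simp add: side_def contour_integrable_continuous_linepath)

lemma contour_integrable_side_div:
  assumes "continuous_on (rect \<eta>) g" "s < 4" "0 < \<eta>" "\<bar>r\<bar> \<le> 1"
  shows "(\<lambda>z. g z / (z - of_real r)) contour_integrable_on side \<eta> s"
proof -
  have "z - of_real r \<noteq> 0" if "z \<in> path_image (side \<eta> s)" for z
    using norm_side_minus_real_ge[OF assms(2) that assms(3,4)] assms(3) by auto
  then have "continuous_on (path_image (side \<eta> s)) (\<lambda>z. g z / (z - of_real r))"
    using side_subset_rect[OF assms(2,3)]
    by (intro continuous_intros continuous_on_subset[OF assms(1)]) auto
  then show ?thesis
    by (simp add: side_def contour_integrable_continuous_linepath)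
qed

lemma rect_integral_cong:
  assumes "0 < \<eta>" "\<And>s z. s < 4 \<Longrightarrow> z \<in> rect \<eta> \<Longrightarrow> h1 s z = h2 s z"
  shows "rect_integral \<eta> h1 = rect_integral \<eta> h2"
  unfolding rect_integral_def
  by (intro arg_cong2[where f = "(/)"] sum.cong contour_integral_cong refl)
     (use assms side_subset_rect in blast)

lemma rect_integral_diff:
  assumes "\<And>s. s < 4 \<Longrightarrow> h1 s contour_integrable_on side \<eta> s"
    "\<And>s. s < 4 \<Longrightarrow> h2 s contour_integrable_on side \<eta> s"
  shows "rect_integral \<eta> (\<lambda>s z. h1 s z - h2 s z) = rect_integral \<eta> h1 - rect_integral \<eta> h2"
  unfolding rect_integral_def
  by (simp add: contour_integral_diff assms sum_subtractf diff_divide_distrib)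

lemma rect_integral_lmul:
  assumes "\<And>s. s < 4 \<Longrightarrow> h s contour_integrable_on side \<eta> s"
  shows "rect_integral \<eta> (\<lambda>s z. c * h s z) = c * rect_integral \<eta> h"
  unfolding rect_integral_def
  by (simp add: contour_integral_lmul assms sum_distrib_left)

lemma rect_integral_sum:
  assumes "finite K" "\<And>k s. k \<in> K \<Longrightarrow> s < 4 \<Longrightarrow> h k s contour_integrable_on side \<eta> s"
  shows "rect_integral \<eta> (\<lambda>s z. \<Sum>k\<in>K. h k s z) = (\<Sum>k\<in>K. rect_integral \<eta> (h k))"
  unfolding rect_integral_def
  by (simp add: contour_integral_sum assms sum_divide_distrib sum.swap[of _ K])

lemma norm_rect_integral_le:
  assumes "0 < \<eta>" "\<eta> \<le> 1"
    and int: "\<And>s. s < 4 \<Longrightarrow> h s contour_integrable_on side \<eta> s"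
    and bnd: "\<And>s z. s < 4 \<Longrightarrow> z \<in> path_image (side \<eta> s) \<Longrightarrow> cmod (h s z) \<le> B"
  shows "cmod (rect_integral \<eta> h) \<le> 3 * B"
proof -
  have "0 \<le> B"
    using bnd[of 0 "corner \<eta> 0"] by (simp add: side_def) (meson norm_ge_zero order_trans)
  have side: "cmod (contour_integral (side \<eta> s) (h s)) \<le> B * 4" if "s < 4" for s
  proof -
    have "cmod (contour_integral (side \<eta> s) (h s)) \<le> B * cmod (corner \<eta> (Suc s mod 4) - corner \<eta> s)"
      using int[OF that] bnd[OF that] \<open>0 \<le> B\<close> unfolding side_def
      by (intro contour_integral_bound_linepath) auto
    also have "\<dots> \<le> B * 4"
    proof (intro mult_left_mono \<open>0 \<le> B\<close>)
      have "s = 0 \<or> s = 1 \<or> s = 2 \<or> s = 3" using that by auto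
      then show "cmod (corner \<eta> (Suc s mod 4) - corner \<eta> s) \<le> 4"
        using assms(1,2) by (auto simp: corner_def intro!: order_trans[OF cmod_le])
    qed
    finally show ?thesis .
  qed
  have "cmod (\<Sum>s<4. contour_integral (side \<eta> s) (h s)) \<le> (\<Sum>s<(4::nat). B * 4)"
    by (rule order_trans[OF norm_sum sum_mono]) (simp add: side)
  then have "cmod (\<Sum>s<4. contour_integral (side \<eta> s) (h s)) \<le> 16 * B" by simp
  have "cmod (rect_integral \<eta> h) = cmod (\<Sum>s<4. contour_integral (side \<eta> s) (h s)) / (2 * pi)"
    by (simp add: rect_integral_def norm_divide norm_mult)
  also have "\<dots> \<le> 16 * B / (2 * pi)"
    using \<open>cmod _ \<le> 16 * B\<close> by (intro divide_right_mono) auto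
  also have "\<dots> \<le> 3 * B"
    using pi_gt3 \<open>0 \<le> B\<close> by (simp add: field_simps, intro mult_left_mono) auto
  finally show ?thesis .
qed

lemma continuous_on_rect_integral_param:
  assumes "0 < \<eta>" "\<And>s. s < 4 \<Longrightarrow> continuous_on (V \<times> rect \<eta>) (\<lambda>(v, z). H s v z)"
  shows "continuous_on V (\<lambda>v. rect_integral \<eta> (\<lambda>s. H s v))"
proof -
  have "continuous_on V (\<lambda>v. contour_integral (side \<eta> s) (H s v))" if "s < 4" for s
  proof -
    have "continuous_on V (\<lambda>v. integral (cbox 0 1)
      (\<lambda>t. H s v (side \<eta> s t) * (corner \<eta> (Suc s mod 4) - corner \<eta> s)))"
    proof (rule integral_continuous_on_param)
      have sub: "(\<lambda>p. (fst p, side \<eta> s (snd p))) ` (V \<times> cbox 0 1) \<subseteq> V \<times> rect \<eta>"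
        using side_subset_rect[OF that assms(1)] by (auto simp: path_image_def)
      have cont: "continuous_on (V \<times> cbox 0 1) (\<lambda>p. (fst p, side \<eta> s (snd p)))"
        unfolding side_def linepath_def by (intro continuous_intros)
      show "continuous_on (V \<times> cbox 0 1)
          (\<lambda>(v, t). H s v (side \<eta> s t) * (corner \<eta> (Suc s mod 4) - corner \<eta> s))"
        using continuous_on_mult[OF continuous_on_compose2[OF assms(2)[OF that] cont sub]
            continuous_on_const]
        by (simp add: case_prod_unfold)
    qed
    then show ?thesis
      unfolding contour_integral_integral side_def vector_derivative_linepath_at cbox_interval .
  qed
  then show ?thesis
    unfolding rect_integral_def by (intro continuous_intros) auto
qed

lemma rect_cauchy_formula:
  assumes "0 < \<eta>" "g holomorphic_on S" "open S" "convex S" "rect \<eta> \<subseteq> S" "\<bar>r\<bar> \<le> 1"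
  shows "g (of_real r) = rect_integral \<eta> (\<lambda>_ z. g z / (z - of_real r))"
proof -
  define w where "w = (of_real r :: complex)"
  define f where "f = (\<lambda>z. g z / (z - w))"
  define \<gamma> where "\<gamma> = rectpath (corner \<eta> 0) (corner \<eta> 2)"
  have \<gamma>: "\<gamma> = side \<eta> 0 +++ side \<eta> 1 +++ side \<eta> 2 +++ side \<eta> 3"
    by (simp add: \<gamma>_def rectpath_def side_def Let_def corner_def)
  have box: "w \<in> box (corner \<eta> 0) (corner \<eta> 2)"
    using assms(1,6) by (auto simp: w_def corner_def in_box_complex_iff)
  have "cbox (corner \<eta> 0) (corner \<eta> 2) = rect \<eta>"
    using assms(1) by (auto simp: rect_def corner_def in_cbox_complex_iff abs_le_iff)
  then have image: "path_image \<gamma> = rect \<eta> - box (corner \<eta> 0) (corner \<eta> 2)"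
    using path_image_rectpath_cbox_minus_box[of "corner \<eta> 0" "corner \<eta> 2"] assms(1)
    by (simp add: \<gamma>_def corner_def)
  have "(f has_contour_integral (2 * pi * \<i> * winding_number \<gamma> w * g w)) \<gamma>"
    unfolding f_def
  proof (rule Cauchy_integral_formula_convex_simple[OF assms(4,2)])
    show "w \<in> interior S"
      using assms(3,5) box box_subset_cbox \<open>cbox _ _ = rect \<eta>\<close> interior_open by blast
    show "path_image \<gamma> \<subseteq> S - {w}" using image box assms(5) by auto
  qed (auto simp: \<gamma>_def)
  then have "(f has_contour_integral (2 * pi * \<i> * g w)) \<gamma>"
    using winding_number_rectpath[OF box] by (simp add: \<gamma>_def)
  moreover have int: "f contour_integrable_on side \<eta> s" if "s < 4" for s
    unfolding f_def w_def
    using holomorphic_on_imp_continuous_on[OF assms(2)] assms(5)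
    by (intro contour_integrable_side_div that assms(1,6)) (rule continuous_on_subset)
  moreover have "(f has_contour_integral (contour_integral (side \<eta> 0) f +
      (contour_integral (side \<eta> 1) f + (contour_integral (side \<eta> 2) f +
        contour_integral (side \<eta> 3) f)))) \<gamma>"
    unfolding \<gamma>
    by (intro has_contour_integral_join has_contour_integral_integral int valid_path_join)
       (auto simp: side_def corner_def)
  ultimately have "2 * pi * \<i> * g w = (\<Sum>s<4. contour_integral (side \<eta> s) f)"
    using has_contour_integral_unique by (simp add: numeral_eq_Suc add.assoc)
  then show ?thesis by (simp add: rect_integral_def f_def w_def field_simps)
qed

section \<open>One-variable polynomial approximation\<close>

definition rect_approx :: "nat \<Rightarrow> real \<Rightarrow> (complex \<Rightarrow> complex) \<Rightarrow> complex \<Rightarrow> complex" where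
  "rect_approx d \<eta> g w = rect_integral \<eta> (\<lambda>s z. g z * cauchy_kernel d \<eta> s z w)"

definition rect_coeff :: "nat \<Rightarrow> real \<Rightarrow> nat \<Rightarrow> (complex \<Rightarrow> complex) \<Rightarrow> complex" where
  "rect_coeff d \<eta> l g = rect_integral \<eta> (\<lambda>s z. g z * cauchy_kernel_coeff d \<eta> s l z)"

lemma rect_approx_poly:
  assumes "continuous_on (rect \<eta>) g" "0 < \<eta>"
  shows "rect_approx d \<eta> g w = (\<Sum>l<d. rect_coeff d \<eta> l g * w^l)"
proof -
  have int: "(\<lambda>z. c * (g z * cauchy_kernel_coeff d \<eta> s l z)) contour_integrable_on side \<eta> s"
    if "s < 4" for s l c
    using that assms
    by (intro contour_integrable_side continuous_intros continuous_on_cauchy_kernel_coeff)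
  have "rect_approx d \<eta> g w =
      rect_integral \<eta> (\<lambda>s z. \<Sum>l<d. w^l * (g z * cauchy_kernel_coeff d \<eta> s l z))"
    unfolding rect_approx_def cauchy_kernel_poly by (simp add: sum_distrib_left mult_ac)
  also have "\<dots> = (\<Sum>l<d. rect_integral \<eta> (\<lambda>s z. w^l * (g z * cauchy_kernel_coeff d \<eta> s l z)))"
    by (rule rect_integral_sum) (auto intro: int)
  also have "\<dots> = (\<Sum>l<d. rect_coeff d \<eta> l g * w^l)"
    using int[of _ 1] by (simp add: rect_integral_lmul rect_coeff_def mult.commute)
  finally show ?thesis .
qed

lemma rect_approx_diff:
  assumes "continuous_on (rect \<eta>) g1" "continuous_on (rect \<eta>) g2" "0 < \<eta>"
  shows "rect_approx d \<eta> (\<lambda>z. g1 z - g2 z) w = rect_approx d \<eta> g1 w - rect_approx d \<eta> g2 w"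
  unfolding rect_approx_def left_diff_distrib
  using assms
  by (intro rect_integral_diff)
     (auto intro!: contour_integrable_side continuous_intros continuous_on_cauchy_kernel)

lemma rect_approx_error:
  assumes "0 < \<eta>" "\<eta> \<le> 1" "g holomorphic_on S" "open S" "convex S" "rect \<eta> \<subseteq> S" "\<bar>r\<bar> \<le> 1"
    and bnd: "\<And>z. z \<in> rect \<eta> \<Longrightarrow> cmod (g z) \<le> M"
  shows "cmod (g (of_real r) - rect_approx d \<eta> g (of_real r))
    \<le> 3 * (M * contraction_rate \<eta> ^ d / \<eta>)"
proof -
  have cont: "continuous_on (rect \<eta>) g"
    using assms(3,6) holomorphic_on_imp_continuous_on continuous_on_subset by blast
  have int_div: "(\<lambda>z. g z / (z - of_real r)) contour_integrable_on side \<eta> s" if "s < 4" for s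
    by (rule contour_integrable_side_div[OF cont that assms(1,7)])
  have int_kernel: "(\<lambda>z. g z * cauchy_kernel d \<eta> s z (of_real r)) contour_integrable_on side \<eta> s"
    if "s < 4" for s
    by (intro contour_integrable_side continuous_intros continuous_on_cauchy_kernel cont that
        assms(1))
  have "g (of_real r) - rect_approx d \<eta> g (of_real r) =
      rect_integral \<eta> (\<lambda>s z. g z / (z - of_real r) - g z * cauchy_kernel d \<eta> s z (of_real r))"
    unfolding rect_cauchy_formula[OF assms(1,3-7)] rect_approx_def
    by (rule rect_integral_diff[symmetric]) (simp_all add: int_div int_kernel)
  also have "cmod \<dots> \<le> 3 * (M * contraction_rate \<eta> ^ d / \<eta>)"
  proof (rule norm_rect_integral_le[OF assms(1,2)])
    fix s :: nat assume s: "s < 4"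
    show "(\<lambda>z. g z / (z - of_real r) - g z * cauchy_kernel d \<eta> s z (of_real r))
        contour_integrable_on side \<eta> s"
      by (intro contour_integrable_diff int_div int_kernel s)
    fix z assume z: "z \<in> path_image (side \<eta> s)"
    have "cmod (g z / (z - of_real r) - g z * cauchy_kernel d \<eta> s z (of_real r)) =
        cmod (g z) * cmod (1 / (z - of_real r) - cauchy_kernel d \<eta> s z (of_real r))"
      by (simp add: norm_mult[symmetric] right_diff_distrib)
    also have "\<dots> \<le> M * (contraction_rate \<eta> ^ d / \<eta>)"
      using bnd side_subset_rect[OF s assms(1)] z
      by (intro mult_mono cauchy_kernel_error[OF s z assms(1,2,7)])
         (auto intro: order_trans[OF norm_ge_zero])
    finally show "cmod (g z / (z - of_real r) - g z * cauchy_kernel d \<eta> s z (of_real r))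
        \<le> M * contraction_rate \<eta> ^ d / \<eta>" by simp
  qed
  finally show ?thesis .
qed

lemma norm_rect_approx_le:
  assumes "continuous_on (rect \<eta>) g" "0 < \<eta>" "\<eta> \<le> 1" "\<bar>r\<bar> \<le> 1"
    and bnd: "\<And>z. z \<in> rect \<eta> \<Longrightarrow> cmod (g z) \<le> B"
  shows "cmod (rect_approx d \<eta> g (of_real r)) \<le> 3 * (B * (2 / \<eta>))"
  unfolding rect_approx_def
proof (rule norm_rect_integral_le[OF assms(2,3)])
  fix s :: nat assume s: "s < 4"
  show "(\<lambda>z. g z * cauchy_kernel d \<eta> s z (of_real r)) contour_integrable_on side \<eta> s"
    by (intro contour_integrable_side continuous_intros continuous_on_cauchy_kernel assms(1,2) s)
  fix z assume z: "z \<in> path_image (side \<eta> s)"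
  then show "cmod (g z * cauchy_kernel d \<eta> s z (of_real r)) \<le> B * (2 / \<eta>)"
    using bnd side_subset_rect[OF s assms(2)] unfolding norm_mult
    by (intro mult_mono norm_cauchy_kernel_le[OF s z assms(2-4)])
       (auto intro: order_trans[OF norm_ge_zero])
qed

lemma rect_coeff_cong:
  "0 < \<eta> \<Longrightarrow> (\<And>z. z \<in> rect \<eta> \<Longrightarrow> g1 z = g2 z) \<Longrightarrow> rect_coeff d \<eta> l g1 = rect_coeff d \<eta> l g2"
  unfolding rect_coeff_def by (rule rect_integral_cong) auto

lemma rect_coeff_sum:
  assumes "finite K" "\<And>k. k \<in> K \<Longrightarrow> continuous_on (rect \<eta>) (g k)" "0 < \<eta>"
  shows "rect_coeff d \<eta> l (\<lambda>z. \<Sum>k\<in>K. g k z) = (\<Sum>k\<in>K. rect_coeff d \<eta> l (g k))"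
  unfolding rect_coeff_def sum_distrib_right
  using assms
  by (intro rect_integral_sum)
     (auto intro!: contour_integrable_side continuous_intros continuous_on_cauchy_kernel_coeff)

lemma rect_coeff_cmult:
  assumes "continuous_on (rect \<eta>) g" "0 < \<eta>"
  shows "rect_coeff d \<eta> l (\<lambda>z. c * g z) = c * rect_coeff d \<eta> l g"
  unfolding rect_coeff_def mult.assoc
  using assms
  by (intro rect_integral_lmul)
     (auto intro!: contour_integrable_side continuous_intros continuous_on_cauchy_kernel_coeff)

section \<open>Coordinatewise approximation on a product of rectangles\<close>

definition vec_upd :: "'a^'i \<Rightarrow> 'i \<Rightarrow> 'a \<Rightarrow> 'a^'i" where
  "vec_upd v j z = (\<chi> i. if i = j then z else v $ i)"

lemma vec_upd_nth [simp]: "vec_upd v j z $ i = (if i = j then z else v $ i)"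
  by (simp add: vec_upd_def)

lemma vec_upd_triv [simp]: "vec_upd v j (v $ j) = v"
  by (simp add: vec_eq_iff)

lemma continuous_on_vec_upd [continuous_intros]:
  assumes "continuous_on S f" "continuous_on S g"
  shows "continuous_on S (\<lambda>x. vec_upd (f x) j (g x))"
  unfolding vec_upd_def
proof (intro continuous_on_vec_lambda)
  show "continuous_on S (\<lambda>x. if i = j then g x else f x $ i)" for i
    by (cases "i = j") (auto intro: continuous_intros assms)
qed

definition polyrect :: "real \<Rightarrow> (complex^'i) set" where
  "polyrect \<eta> = {v. \<forall>i. v $ i \<in> rect \<eta>}"

lemma rect_mono: "\<eta> \<le> \<eta>' \<Longrightarrow> rect \<eta> \<subseteq> rect \<eta>'"
  unfolding rect_def by auto

lemma polyrect_mono: "\<eta> \<le> \<eta>' \<Longrightarrow> polyrect \<eta> \<subseteq> polyrect \<eta>'"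
  unfolding polyrect_def using rect_mono by blast

lemma vec_upd_in_polyrect: "v \<in> polyrect \<eta> \<Longrightarrow> z \<in> rect \<eta> \<Longrightarrow> vec_upd v j z \<in> polyrect \<eta>"
  by (simp add: polyrect_def)

lemma compact_polyrect: "compact (polyrect \<eta>)"
proof (rule compact_eq_bounded_closed[THEN iffD2, OF conjI])
  have "norm v \<le> CARD('i) * (1 + 2 * \<bar>\<eta>\<bar>)" if "v \<in> polyrect \<eta>" for v :: "complex^'i"
  proof -
    have "norm v \<le> (\<Sum>i\<in>UNIV. cmod (v $ i))"
      unfolding norm_vec_def by (rule L2_set_le_sum) simp
    also have "\<dots> \<le> (\<Sum>i\<in>(UNIV::'i set). 1 + 2 * \<bar>\<eta>\<bar>)"
    proof (rule sum_mono)
      fix i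
      have "\<bar>Re (v $ i)\<bar> \<le> 1 + \<eta>" "\<bar>Im (v $ i)\<bar> \<le> \<eta>"
        using that by (auto simp: polyrect_def rect_def)
      then show "cmod (v $ i) \<le> 1 + 2 * \<bar>\<eta>\<bar>"
        using cmod_le[of "v $ i"] abs_ge_self[of \<eta>] by linarith
    qed
    finally show ?thesis by simp
  qed
  then show "bounded (polyrect \<eta> :: (complex^'i) set)"
    unfolding bounded_iff by blast
  show "closed (polyrect \<eta> :: (complex^'i) set)"
    unfolding polyrect_def rect_def
    by (intro closed_vector_box allI closed_Collect_conj closed_Collect_le continuous_intros)
qed

lemma continuous_on_slice:
  assumes "continuous_on (polyrect \<eta>) G" "v \<in> polyrect \<eta>"
  shows "continuous_on (rect \<eta>) (\<lambda>z. G (vec_upd v j z))"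
  by (rule continuous_on_compose2[OF assms(1)])
     (auto intro!: continuous_intros vec_upd_in_polyrect assms(2))

definition coord_coeff ::
    "nat \<Rightarrow> real \<Rightarrow> 'i \<Rightarrow> nat \<Rightarrow> (complex^'i \<Rightarrow> complex) \<Rightarrow> complex^'i \<Rightarrow> complex" where
  "coord_coeff d \<eta> j l G v = rect_coeff d \<eta> l (\<lambda>z. G (vec_upd v j z))"

definition coord_approx :: "nat \<Rightarrow> real \<Rightarrow> 'i \<Rightarrow> (complex^'i \<Rightarrow> complex) \<Rightarrow> complex^'i \<Rightarrow> complex" where
  "coord_approx d \<eta> j G v = rect_approx d \<eta> (\<lambda>z. G (vec_upd v j z)) (v $ j)"

fun iter_approx :: "nat \<Rightarrow> real \<Rightarrow> (complex^'i \<Rightarrow> complex) \<Rightarrow> 'i list \<Rightarrow> complex^'i \<Rightarrow> complex" where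
  "iter_approx d \<eta> G [] = G"
| "iter_approx d \<eta> G (j # js) = coord_approx d \<eta> j (iter_approx d \<eta> G js)"

lemma coord_approx_poly:
  assumes "continuous_on (polyrect \<eta>) G" "v \<in> polyrect \<eta>" "0 < \<eta>"
  shows "coord_approx d \<eta> j G v = (\<Sum>l<d. coord_coeff d \<eta> j l G v * (v $ j)^l)"
  unfolding coord_approx_def coord_coeff_def
  by (rule rect_approx_poly[OF continuous_on_slice[OF assms(1,2)] assms(3)])

lemma continuous_on_coord_coeff:
  assumes "continuous_on (polyrect \<eta>) G" "0 < \<eta>"
  shows "continuous_on (polyrect \<eta>) (coord_coeff d \<eta> j l G)"
  unfolding coord_coeff_def rect_coeff_def
proof (rule continuous_on_rect_integral_param[OF assms(2)])
  have "continuous_on (polyrect \<eta> \<times> rect \<eta>) (\<lambda>p. G (vec_upd (fst p) j (snd p)))"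
    by (rule continuous_on_compose2[OF assms(1)])
       (auto intro!: continuous_intros vec_upd_in_polyrect)
  then show "continuous_on (polyrect \<eta> \<times> rect \<eta>)
      (\<lambda>(v, z). G (vec_upd v j z) * cauchy_kernel_coeff d \<eta> s l z)" for s
    by (auto simp: case_prod_unfold intro!: continuous_intros
        continuous_on_compose2[OF continuous_on_cauchy_kernel_coeff])
qed

lemma continuous_on_coord_approx:
  assumes "continuous_on (polyrect \<eta>) G" "0 < \<eta>"
  shows "continuous_on (polyrect \<eta>) (coord_approx d \<eta> j G)"
  using coord_approx_poly[OF assms(1) _ assms(2)]
  by (subst continuous_on_cong[OF refl])
     (auto intro!: continuous_intros continuous_on_coord_coeff assms)

lemma continuous_on_iter_approx:
  "continuous_on (polyrect \<eta>) G \<Longrightarrow> 0 < \<eta> \<Longrightarrow> continuous_on (polyrect \<eta>) (iter_approx d \<eta> G js)"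
  by (induction js) (auto intro: continuous_on_coord_approx)

lemma coord_approx_diff:
  assumes "continuous_on (polyrect \<eta>) G1" "continuous_on (polyrect \<eta>) G2" "v \<in> polyrect \<eta>" "0 < \<eta>"
  shows "coord_approx d \<eta> j (\<lambda>u. G1 u - G2 u) v = coord_approx d \<eta> j G1 v - coord_approx d \<eta> j G2 v"
  unfolding coord_approx_def
  by (rule rect_approx_diff[OF continuous_on_slice[OF assms(1,3)] continuous_on_slice[OF assms(2,3)]
        assms(4)])

text \<open>Each further coordinate step can amplify the error of the previous ones by at most
  \<open>6 / \<eta>\<close>, the operator bound in \<open>norm_rect_approx_le\<close>.\<close>
lemma iter_approx_error:
  fixes F :: "complex^'i \<Rightarrow> complex"
  assumes cont: "continuous_on (polyrect \<eta>) F" and \<eta>: "0 < \<eta>" "\<eta> \<le> 1"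
    and hol: "\<And>v j. v \<in> polyrect \<eta> \<Longrightarrow> (\<lambda>z. F (vec_upd v j z)) holomorphic_on S"
    and S: "open S" "convex S" "rect \<eta> \<subseteq> S"
    and bnd: "\<And>u. u \<in> polyrect \<eta> \<Longrightarrow> cmod (F u) \<le> M"
  shows "distinct js \<Longrightarrow> v \<in> polyrect \<eta> \<Longrightarrow> (\<forall>i\<in>set js. v $ i \<in> of_real ` {-1..1}) \<Longrightarrow>
    cmod (F v - iter_approx d \<eta> F js v) \<le>
      3 * (M * contraction_rate \<eta> ^ d / \<eta>) * (\<Sum>k<length js. (6 / \<eta>)^k)"
proof (induction js arbitrary: v)
  case Nil
  then show ?case by simp
next
  case (Cons j js)
  define c where "c = 3 * (M * contraction_rate \<eta> ^ d / \<eta>)"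
  define E where "E = c * (\<Sum>k<length js. (6 / \<eta>)^k)"
  obtain r where r: "v $ j = of_real r" "\<bar>r\<bar> \<le> 1" using Cons.prems(3) by auto
  have cont_approx: "continuous_on (polyrect \<eta>) (iter_approx d \<eta> F js)"
    by (rule continuous_on_iter_approx[OF cont \<eta>(1)])
  have "F v - iter_approx d \<eta> F (j # js) v =
      (F v - coord_approx d \<eta> j F v) + coord_approx d \<eta> j (\<lambda>u. F u - iter_approx d \<eta> F js u) v"
    using coord_approx_diff[OF cont cont_approx Cons.prems(2) \<eta>(1)] by simp
  also have "cmod \<dots> \<le> c + 3 * (E * (2 / \<eta>))"
  proof (rule norm_triangle_le[OF add_mono])
    have "cmod ((\<lambda>z. F (vec_upd v j z)) (of_real r) -
        rect_approx d \<eta> (\<lambda>z. F (vec_upd v j z)) (of_real r)) \<le> c"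
      unfolding c_def
      by (rule rect_approx_error[OF \<eta> hol[OF Cons.prems(2)] S r(2)])
         (use bnd vec_upd_in_polyrect[OF Cons.prems(2)] in blast)
    then show "cmod (F v - coord_approx d \<eta> j F v) \<le> c"
      unfolding coord_approx_def using r(1)[symmetric] by simp
    show "cmod (coord_approx d \<eta> j (\<lambda>u. F u - iter_approx d \<eta> F js u) v) \<le> 3 * (E * (2 / \<eta>))"
      unfolding coord_approx_def r(1)
    proof (rule norm_rect_approx_le[OF _ \<eta> r(2)])
      show "continuous_on (rect \<eta>) (\<lambda>z. F (vec_upd v j z) - iter_approx d \<eta> F js (vec_upd v j z))"
        by (intro continuous_intros continuous_on_slice cont cont_approx Cons.prems(2))
      fix z assume "z \<in> rect \<eta>"
      then show "cmod (F (vec_upd v j z) - iter_approx d \<eta> F js (vec_upd v j z)) \<le> E"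
        unfolding E_def c_def
        using Cons.prems(1,3) vec_upd_in_polyrect[OF Cons.prems(2)] by (intro Cons.IH) auto
    qed
  qed
  also have "\<dots> = c * (\<Sum>k<length (j # js). (6 / \<eta>)^k)"
    unfolding E_def using \<eta>(1)
    by (simp add: sum.lessThan_Suc_shift sum_distrib_left algebra_simps del: sum.lessThan_Suc)
  finally show ?case unfolding c_def .
qed

definition poly_in_coords :: "nat \<Rightarrow> real \<Rightarrow> 'i set \<Rightarrow> (complex^'i \<Rightarrow> complex) \<Rightarrow> bool" where
  "poly_in_coords d \<eta> J P \<longleftrightarrow> (\<exists>C. (\<forall>\<kappa>. continuous_on (polyrect \<eta>) (C \<kappa>)) \<and>
     (\<forall>\<kappa> v w. (\<forall>i. i \<notin> J \<longrightarrow> v $ i = w $ i) \<longrightarrow> C \<kappa> v = C \<kappa> w) \<and>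
     (\<forall>v\<in>polyrect \<eta>. P v = (\<Sum>\<kappa>\<in>PiE J (\<lambda>_. {..<d}). C \<kappa> v * (\<Prod>i\<in>J. (v $ i) ^ \<kappa> i))))"

lemma poly_in_coords_empty:
  assumes "continuous_on (polyrect \<eta>) P"
  shows "poly_in_coords d \<eta> {} P"
  unfolding poly_in_coords_def
  by (rule exI[of _ "\<lambda>_. P"]) (auto simp: assms, metis vec_eq_iff)

lemma poly_in_coords_imp_continuous:
  assumes "poly_in_coords d \<eta> J P"
  shows "continuous_on (polyrect \<eta>) P"
proof -
  obtain C where C: "\<And>\<kappa>. continuous_on (polyrect \<eta>) (C \<kappa>)"
    and P: "\<And>v. v \<in> polyrect \<eta> \<Longrightarrow> P v = (\<Sum>\<kappa>\<in>PiE J (\<lambda>_. {..<d}). C \<kappa> v * (\<Prod>i\<in>J. (v $ i) ^ \<kappa> i))"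
    using assms unfolding poly_in_coords_def by blast
  show ?thesis
    by (subst continuous_on_cong[OF refl P]) (auto intro!: continuous_intros C)
qed

lemma coord_coeff_sum_monomials:
  assumes C: "\<And>\<kappa>. \<kappa> \<in> K \<Longrightarrow> continuous_on (polyrect \<eta>) (C \<kappa>)" and "finite K" "j \<notin> J" "0 < \<eta>"
    and P: "\<And>u. u \<in> polyrect \<eta> \<Longrightarrow> P u = (\<Sum>\<kappa>\<in>K. C \<kappa> u * (\<Prod>i\<in>J. (u $ i) ^ \<kappa> i))"
    and v: "v \<in> polyrect \<eta>"
  shows "coord_coeff d \<eta> j l P v = (\<Sum>\<kappa>\<in>K. coord_coeff d \<eta> j l (C \<kappa>) v * (\<Prod>i\<in>J. (v $ i) ^ \<kappa> i))"
proof -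
  have mono: "(\<Prod>i\<in>J. (vec_upd v j z $ i) ^ \<kappa> i) = (\<Prod>i\<in>J. (v $ i) ^ \<kappa> i)" for z \<kappa>
    using \<open>j \<notin> J\<close> by (intro prod.cong) auto
  have "coord_coeff d \<eta> j l P v =
      rect_coeff d \<eta> l (\<lambda>z. \<Sum>\<kappa>\<in>K. (\<Prod>i\<in>J. (v $ i) ^ \<kappa> i) * C \<kappa> (vec_upd v j z))"
    unfolding coord_coeff_def
    by (rule rect_coeff_cong[OF \<open>0 < \<eta>\<close>])
       (simp add: P vec_upd_in_polyrect[OF v] mono mult.commute del: vec_upd_nth)
  also have "\<dots> = (\<Sum>\<kappa>\<in>K. (\<Prod>i\<in>J. (v $ i) ^ \<kappa> i) * coord_coeff d \<eta> j l (C \<kappa>) v)"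
    unfolding coord_coeff_def
    using continuous_on_slice[OF C v] \<open>finite K\<close> \<open>0 < \<eta>\<close>
    by (simp add: rect_coeff_sum rect_coeff_cmult continuous_intros)
  finally show ?thesis by (simp add: mult.commute)
qed

lemma sum_PiE_insert:
  assumes "j \<notin> J"
  shows "(\<Sum>\<kappa>\<in>PiE (insert j J) (\<lambda>_. A). g \<kappa>) = (\<Sum>l\<in>A. \<Sum>\<kappa>\<in>PiE J (\<lambda>_. A). g (\<kappa>(j := l)))"
  unfolding PiE_insert_eq sum.cartesian_product
  by (subst sum.reindex[OF inj_combinator[OF assms]]) (simp add: case_prod_unfold)

lemma poly_in_coords_coord_approx:
  assumes "poly_in_coords d \<eta> J P" "j \<notin> J" "0 < \<eta>"
  shows "poly_in_coords d \<eta> (insert j J) (coord_approx d \<eta> j P)"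
proof -
  obtain C where C: "\<And>\<kappa>. continuous_on (polyrect \<eta>) (C \<kappa>)"
    and indep: "\<And>\<kappa> v w. (\<forall>i. i \<notin> J \<longrightarrow> v $ i = w $ i) \<Longrightarrow> C \<kappa> v = C \<kappa> w"
    and P: "\<And>v. v \<in> polyrect \<eta> \<Longrightarrow> P v = (\<Sum>\<kappa>\<in>PiE J (\<lambda>_. {..<d}). C \<kappa> v * (\<Prod>i\<in>J. (v $ i) ^ \<kappa> i))"
    using assms(1) unfolding poly_in_coords_def by blast
  \<comment> \<open>exponent vectors in \<open>PiE J\<close> are \<open>undefined\<close> outside \<open>J\<close>, so resetting the
    \<open>j\<close>-th exponent to \<open>undefined\<close> recovers the old index\<close>
  define C' where "C' \<kappa> = coord_coeff d \<eta> j (\<kappa> j) (C (\<kappa>(j := undefined)))" for \<kappa>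
  have C'_upd: "C' (\<kappa>(j := l)) = coord_coeff d \<eta> j l (C \<kappa>)" if "\<kappa> \<in> PiE J (\<lambda>_. {..<d})" for \<kappa> l
    using that assms(2) by (simp add: C'_def PiE_def extensional_def fun_upd_idem)
  have prod_upd: "(\<Prod>i\<in>insert j J. (v $ i) ^ (\<kappa>(j := l)) i) = (v $ j)^l * (\<Prod>i\<in>J. (v $ i) ^ \<kappa> i)"
    for v :: "complex^'a" and \<kappa> l
  proof -
    have "(\<Prod>i\<in>J. (v $ i) ^ (\<kappa>(j := l)) i) = (\<Prod>i\<in>J. (v $ i) ^ \<kappa> i)"
      using assms(2) by (intro prod.cong) auto
    then show ?thesis using assms(2) by simp
  qed
  show ?thesis
    unfolding poly_in_coords_def
  proof (intro exI[of _ C'] conjI allI impI ballI)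
    show "continuous_on (polyrect \<eta>) (C' \<kappa>)" for \<kappa>
      unfolding C'_def by (intro continuous_on_coord_coeff C assms(3))
    fix \<kappa> and v w :: "complex^'a" assume "\<forall>i. i \<notin> insert j J \<longrightarrow> v $ i = w $ i"
    then have "C \<kappa>' (vec_upd v j z) = C \<kappa>' (vec_upd w j z)" for \<kappa>' z
      by (intro indep) auto
    then show "C' \<kappa> v = C' \<kappa> w" by (simp add: C'_def coord_coeff_def)
  next
    fix v :: "complex^'a" assume v: "v \<in> polyrect \<eta>"
    have "coord_approx d \<eta> j P v = (\<Sum>l<d. \<Sum>\<kappa>\<in>PiE J (\<lambda>_. {..<d}).
        coord_coeff d \<eta> j l (C \<kappa>) v * ((v $ j)^l * (\<Prod>i\<in>J. (v $ i) ^ \<kappa> i)))"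
      unfolding coord_approx_poly[OF poly_in_coords_imp_continuous[OF assms(1)] v assms(3)]
      by (simp add: coord_coeff_sum_monomials[OF C _ assms(2,3) P v] finite_PiE sum_distrib_left
          sum_distrib_right mult_ac)
    also have "\<dots> = (\<Sum>\<kappa>\<in>PiE (insert j J) (\<lambda>_. {..<d}).
        C' \<kappa> v * (\<Prod>i\<in>insert j J. (v $ i) ^ \<kappa> i))"
      unfolding sum_PiE_insert[OF assms(2)]
      by (intro sum.cong refl) (auto simp: C'_upd prod_upd simp del: fun_upd_apply)
    finally show "coord_approx d \<eta> j P v =
        (\<Sum>\<kappa>\<in>PiE (insert j J) (\<lambda>_. {..<d}). C' \<kappa> v * (\<Prod>i\<in>insert j J. (v $ i) ^ \<kappa> i))" .
  qed
qed

lemma poly_in_coords_iter_approx: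
  assumes "continuous_on (polyrect \<eta>) G" "0 < \<eta>"
  shows "distinct js \<Longrightarrow> poly_in_coords d \<eta> (set js) (iter_approx d \<eta> G js)"
  by (induction js) (auto intro: poly_in_coords_empty assms poly_in_coords_coord_approx)

lemma poly_in_coords_UNIV:
  fixes P :: "complex^'i \<Rightarrow> complex"
  assumes "poly_in_coords d \<eta> UNIV P"
  obtains c where "\<And>v. v \<in> polyrect \<eta> \<Longrightarrow>
    P v = (\<Sum>\<kappa>\<in>PiE UNIV (\<lambda>_. {..<d}). c \<kappa> * (\<Prod>i\<in>UNIV. (v $ i) ^ \<kappa> i))"
proof -
  obtain C where indep: "\<And>\<kappa> (v :: complex^'i) w. (\<forall>i. i \<notin> UNIV \<longrightarrow> v $ i = w $ i) \<Longrightarrow> C \<kappa> v = C \<kappa> w"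
    and P: "\<And>v. v \<in> polyrect \<eta> \<Longrightarrow>
      P v = (\<Sum>\<kappa>\<in>PiE UNIV (\<lambda>_. {..<d}). C \<kappa> v * (\<Prod>i\<in>UNIV. (v $ i) ^ \<kappa> i))"
    using assms unfolding poly_in_coords_def by blast
  have const: "C \<kappa> v = C \<kappa> 0" for \<kappa> v by (rule indep) simp
  show ?thesis
  proof (rule that)
    fix v :: "complex^'i" assume "v \<in> polyrect \<eta>"
    then show "P v = (\<Sum>\<kappa>\<in>PiE UNIV (\<lambda>_. {..<d}). C \<kappa> 0 * (\<Prod>i\<in>UNIV. (v $ i) ^ \<kappa> i))"
      unfolding P[OF \<open>v \<in> polyrect \<eta>\<close>] by (intro sum.cong refl) (metis const)
  qed
qed

section \<open>Holomorphic extensions\<close>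

definition split_vec :: "'a^('n::finite + 'm::finite) \<Rightarrow> ('a^'n) \<times> ('a^'m)" where
  "split_vec v = ((\<chi> a. v $ Inl a), (\<chi> b. v $ Inr b))"

lemma split_vec_join_vec [simp]: "split_vec (join_vec x w) = (x, w)"
  by (simp add: split_vec_def vec_eq_iff)

lemma cemb_nth [simp]: "cemb r $ i = of_real (r $ i)"
  by (simp add: cemb_def)

lemma cemb_join_vec: "cemb (join_vec x w) = join_vec (cemb x) (cemb w)"
  by (simp add: vec_eq_iff join_vec_def split: sum.split)

lemma join_vec_in_cube: "x \<in> cube \<Longrightarrow> w \<in> cube \<Longrightarrow> join_vec x w \<in> cube"
  by (simp add: cube_def join_vec_def split: sum.split)

lemma cemb_in_polyrect: "r \<in> cube \<Longrightarrow> 0 \<le> \<eta> \<Longrightarrow> cemb r \<in> polyrect \<eta>"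
  by (auto simp: cube_def polyrect_def rect_def intro: order_trans)

lemma split_vec_cemb_in_region: "split_vec (cemb r) \<in> region t"
proof -
  have "0 \<le> (\<Sum>i\<in>UNIV. (r $ Inl i)^2) + (\<Sum>j\<in>UNIV. (r $ Inr j)^2)"
    by (intro add_nonneg_nonneg sum_nonneg) auto
  moreover have "- (t^2) \<le> 0" by simp
  ultimately have "- (t^2) \<le> (\<Sum>i\<in>UNIV. (r $ Inl i)^2) + (\<Sum>j\<in>UNIV. (r $ Inr j)^2)"
    by linarith
  then show ?thesis
    by (simp add: region_def split_vec_def Re_sum power2_eq_square)
qed

lemma cmul_complex_linear:
  assumes "linear D" "\<And>v. D (cmul \<i> v) = \<i> * D v"
  shows "D (cmul c v) = c * D v"
proof -
  have "cmul c v = Re c *\<^sub>R v + Im c *\<^sub>R cmul \<i> v"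
    by (simp add: cmul_def vec_eq_iff prod_eq_iff complex_eq_iff)
  then have "D (cmul c v) = Re c *\<^sub>R D v + Im c *\<^sub>R (\<i> * D v)"
    by (simp add: linear_add[OF assms(1)] linear_scale[OF assms(1)] assms(2))
  also have "\<dots> = c * D v"
    by (simp add: scaleR_conv_of_real complex_eq_iff algebra_simps)
  finally show ?thesis .
qed

lemma continuous_on_cholomorphic: "cholomorphic_on G U \<Longrightarrow> continuous_on U G"
  unfolding cholomorphic_on_def
  by (meson continuous_at_imp_continuous_on has_derivative_continuous)

lemma holomorphic_on_slice:
  assumes "cholomorphic_on G U" "open S" "\<And>z. z \<in> S \<Longrightarrow> split_vec (vec_upd v j z) \<in> U"
  shows "(\<lambda>z. G (split_vec (vec_upd v j z))) holomorphic_on S"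
  unfolding holomorphic_on_open[OF assms(2)]
proof
  fix z assume "z \<in> S"
  obtain D where D: "(G has_derivative D) (at (split_vec (vec_upd v j z)))"
    and Di: "\<And>u. D (cmul \<i> u) = \<i> * D u"
    using assms(1) assms(3)[OF \<open>z \<in> S\<close>] unfolding cholomorphic_on_def by blast
  define e where "e = split_vec (vec_upd 0 j (1::complex))"
  have line: "split_vec (vec_upd v j z') = split_vec (vec_upd v j 0) + cmul z' e" for z'
    by (simp add: split_vec_def cmul_def e_def vec_eq_iff)
  have "linear (\<lambda>h. cmul h e)"
    by (rule linearI) (simp_all add: cmul_def vec_eq_iff algebra_simps)
  then have "((\<lambda>z'. split_vec (vec_upd v j 0) + cmul z' e) has_derivative (\<lambda>h. cmul h e)) (at z)"
    using has_derivative_add[OF has_derivative_const bounded_linear_imp_has_derivative]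
    by (simp add: linear_conv_bounded_linear)
  then have "((\<lambda>z'. split_vec (vec_upd v j z')) has_derivative (\<lambda>h. cmul h e)) (at z)"
    by (simp only: line[symmetric])
  from has_derivative_compose[OF this D]
  have "((\<lambda>z'. G (split_vec (vec_upd v j z'))) has_derivative (\<lambda>h. D (cmul h e))) (at z)" .
  moreover have "(\<lambda>h. D (cmul h e)) = (*) (D e)"
    using cmul_complex_linear[OF has_derivative_linear[OF D] Di] by (auto simp: mult.commute)
  ultimately have "((\<lambda>z'. G (split_vec (vec_upd v j z'))) has_derivative (*) (D e)) (at z)"
    by simp
  then show "\<exists>f'. ((\<lambda>z'. G (split_vec (vec_upd v j z'))) has_field_derivative f') (at z)"
    unfolding has_field_derivative_def by blast
qed

lemma polyrect_subset_open:
  fixes U :: "(complex^'i) set"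
  assumes "open U" "\<And>r. cemb r \<in> U"
  obtains \<eta> where "0 < \<eta>" "\<eta> \<le> 1" "polyrect \<eta> \<subseteq> U"
proof -
  define A where "A = cemb ` cbox (-2 :: real^'i) 2"
  have "compact A"
    unfolding A_def cemb_def by (intro compact_continuous_image compact_cbox continuous_intros)
  then obtain \<epsilon> where "0 < \<epsilon>" and \<epsilon>: "(\<Union>a\<in>A. ball a \<epsilon>) \<subseteq> U"
    using compact_subset_open_imp_ball_epsilon_subset[OF _ assms(1)] assms(2)
    unfolding A_def by blast
  define N where "N = real CARD('i)"
  define \<eta> where "\<eta> = min 1 (\<epsilon> / (N + 1))"
  have "0 < \<eta>" "\<eta> \<le> 1" using \<open>0 < \<epsilon>\<close> by (auto simp: \<eta>_def N_def)
  have "N * \<eta> < \<epsilon>"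
  proof -
    have "N * \<eta> \<le> N * (\<epsilon> / (N + 1))" by (intro mult_left_mono) (auto simp: \<eta>_def N_def)
    also have "\<dots> < \<epsilon>" using \<open>0 < \<epsilon>\<close> by (simp add: N_def field_simps)
    finally show ?thesis .
  qed
  have "u \<in> U" if u: "u \<in> polyrect \<eta>" for u
  proof -
    define r where "r = ((\<chi> i. Re (u $ i)) :: real^'i)"
    have re: "\<bar>Re (u $ i)\<bar> \<le> 1 + \<eta>" and im: "\<bar>Im (u $ i)\<bar> \<le> \<eta>" for i
      using u by (auto simp: polyrect_def rect_def)
    have "-2 \<le> Re (u $ i) \<and> Re (u $ i) \<le> 2" for i using re[of i] \<open>\<eta> \<le> 1\<close> by linarith
    then have "r \<in> cbox (-2) 2"
      by (simp add: r_def mem_box_cart)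
    moreover have "dist (cemb r) u < \<epsilon>"
    proof -
      have "dist (cemb r) u \<le> (\<Sum>i\<in>UNIV. cmod ((cemb r - u) $ i))"
        unfolding dist_norm norm_vec_def by (rule L2_set_le_sum) simp
      also have "\<dots> = (\<Sum>i\<in>UNIV. \<bar>Im (u $ i)\<bar>)"
        by (simp add: r_def cmod_def)
      also have "\<dots> \<le> N * \<eta>"
        using sum_mono[of UNIV "\<lambda>i. \<bar>Im (u $ i)\<bar>" "\<lambda>_. \<eta>"] im by (simp add: N_def)
      finally show ?thesis using \<open>N * \<eta> < \<epsilon>\<close> by linarith
    qed
    ultimately have "u \<in> (\<Union>a\<in>A. ball a \<epsilon>)"
      unfolding A_def by (intro UN_I[of "cemb r"]) auto
    then show "u \<in> U" using \<epsilon> by blast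
  qed
  then show ?thesis using that \<open>0 < \<eta>\<close> \<open>\<eta> \<le> 1\<close> by blast
qed

lemma analytic_ext_polyrect:
  fixes f :: "real^'n \<Rightarrow> real^'m \<Rightarrow> real"
  assumes "analytic_ext t f"
  obtains \<eta> S and F :: "complex^('n + 'm) \<Rightarrow> complex"
  where "0 < \<eta>" "\<eta> \<le> 1" "open S" "convex S" "rect \<eta> \<subseteq> S" "continuous_on (polyrect \<eta>) F"
    "\<And>v j. v \<in> polyrect \<eta> \<Longrightarrow> (\<lambda>z. F (vec_upd v j z)) holomorphic_on S"
    "\<And>x w. x \<in> cube \<Longrightarrow> w \<in> cube \<Longrightarrow> F (cemb (join_vec x w)) = of_real (f x w)"
proof -
  obtain G :: "(complex^'n) \<times> (complex^'m) \<Rightarrow> complex" and U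
    where "open U" "region t \<subseteq> U" and G: "cholomorphic_on G U"
    and agree: "\<And>x w. x \<in> cube \<Longrightarrow> w \<in> cube \<Longrightarrow> G (cemb x, cemb w) = of_real (f x w)"
    using assms unfolding analytic_ext_def by blast
  have "continuous_on UNIV split_vec"
    unfolding split_vec_def by (intro continuous_intros continuous_on_vec_lambda)
  then have "open (split_vec -` U)"
    using \<open>open U\<close> by (intro open_vimage)
  moreover have "cemb r \<in> split_vec -` U" for r :: "real^('n + 'm)"
    using split_vec_cemb_in_region \<open>region t \<subseteq> U\<close> by blast
  ultimately obtain \<eta>0 where \<eta>0: "0 < \<eta>0" "\<eta>0 \<le> 1" and sub: "polyrect \<eta>0 \<subseteq> split_vec -` U"
    by (rule polyrect_subset_open)
  define \<eta> where "\<eta> = \<eta>0 / 2"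
  define S where "S = box (Complex (-(1 + \<eta>0)) (-\<eta>0)) (Complex (1 + \<eta>0) \<eta>0)"
  define F where "F v = G (split_vec v)" for v :: "complex^('n + 'm)"
  have "polyrect \<eta> \<subseteq> polyrect \<eta>0"
    using \<eta>0 by (intro polyrect_mono) (simp add: \<eta>_def)
  have S_rect: "S \<subseteq> rect \<eta>0"
    by (auto simp: S_def rect_def in_box_complex_iff)
  show ?thesis
  proof
    show "0 < \<eta>" "\<eta> \<le> 1" using \<eta>0 by (simp_all add: \<eta>_def)
    show "open S" "convex S" by (simp_all add: S_def open_box convex_box)
    show "rect \<eta> \<subseteq> S" using \<eta>0 by (auto simp: rect_def S_def \<eta>_def in_box_complex_iff)
    show "continuous_on (polyrect \<eta>) F"
      unfolding F_def
      using \<open>polyrect \<eta> \<subseteq> polyrect \<eta>0\<close> sub \<open>continuous_on UNIV split_vec\<close>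
      by (intro continuous_on_compose2[OF continuous_on_cholomorphic[OF G]])
         (auto intro: continuous_on_subset)
    show "(\<lambda>z. F (vec_upd v j z)) holomorphic_on S" if "v \<in> polyrect \<eta>" for v j
      unfolding F_def
      using that \<open>polyrect \<eta> \<subseteq> polyrect \<eta>0\<close> sub S_rect vec_upd_in_polyrect
      by (intro holomorphic_on_slice[OF G \<open>open S\<close>]) blast
    show "F (cemb (join_vec x w)) = of_real (f x w)" if "x \<in> cube" "w \<in> cube" for x w
      using agree[OF that] by (simp add: F_def cemb_join_vec)
  qed
qed

section \<open>Geometric error and logarithmic rank\<close>

lemma Re_sum_cemb_monomials:
  "Re (\<Sum>\<kappa>\<in>K. c \<kappa> * (\<Prod>i\<in>UNIV. (cemb r $ i) ^ \<kappa> i)) = (\<Sum>\<kappa>\<in>K. Re (c \<kappa>) * (\<Prod>i\<in>UNIV. (r $ i) ^ \<kappa> i))"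
  by (simp add: Re_sum flip: of_real_power of_real_prod)

lemma cheb_sep_approx_of_polyrect_extension:
  fixes f :: "real^'n \<Rightarrow> real^'m \<Rightarrow> real" and F :: "complex^('n + 'm) \<Rightarrow> complex"
    and js :: "('n + 'm) list"
  assumes \<eta>: "0 < \<eta>" "\<eta> \<le> 1" and S: "open S" "convex S" "rect \<eta> \<subseteq> S"
    and cont: "continuous_on (polyrect \<eta>) F"
    and hol: "\<And>v j. v \<in> polyrect \<eta> \<Longrightarrow> (\<lambda>z. F (vec_upd v j z)) holomorphic_on S"
    and M: "\<And>u. u \<in> polyrect \<eta> \<Longrightarrow> cmod (F u) \<le> M"
    and agree: "\<And>x w. x \<in> cube \<Longrightarrow> w \<in> cube \<Longrightarrow> F (cemb (join_vec x w)) = of_real (f x w)"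
    and js: "set js = UNIV" "distinct js" and "1 \<le> d"
  shows "cheb_sep_approx f (3 * (M * contraction_rate \<eta> ^ d / \<eta>) * (\<Sum>k<length js. (6 / \<eta>)^k))
    (d ^ CARD('m))"
proof -
  have "poly_in_coords d \<eta> UNIV (iter_approx d \<eta> F js)"
    using poly_in_coords_iter_approx[OF cont \<eta>(1) js(2)] js(1) by simp
  then obtain c where c: "\<And>v. v \<in> polyrect \<eta> \<Longrightarrow> iter_approx d \<eta> F js v =
      (\<Sum>\<kappa>\<in>PiE UNIV (\<lambda>_. {..<d}). c \<kappa> * (\<Prod>i\<in>UNIV. (v $ i) ^ \<kappa> i))"
    by (rule poly_in_coords_UNIV) (rule that)
  show ?thesis
  proof (rule cheb_sep_approx_of_poly[OF \<open>1 \<le> d\<close>])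
    fix x :: "real^'n" and w :: "real^'m" assume "x \<in> cube" "w \<in> cube"
    define v where "v = cemb (join_vec x w)"
    have r: "join_vec x w \<in> cube" using \<open>x \<in> cube\<close> \<open>w \<in> cube\<close> by (rule join_vec_in_cube)
    then have v: "v \<in> polyrect \<eta>" using \<eta>(1) by (simp add: v_def cemb_in_polyrect)
    have "Re (iter_approx d \<eta> F js v) =
        Re (\<Sum>\<kappa>\<in>PiE UNIV (\<lambda>_. {..<d}). c \<kappa> * (\<Prod>i\<in>UNIV. (v $ i) ^ \<kappa> i))"
      by (simp only: c[OF v])
    also have "\<dots> =
        (\<Sum>\<kappa>\<in>PiE UNIV (\<lambda>_. {..<d}). Re (c \<kappa>) * (\<Prod>i\<in>UNIV. (join_vec x w $ i) ^ \<kappa> i))"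
      unfolding v_def by (rule Re_sum_cemb_monomials)
    finally have "\<bar>f x w - (\<Sum>\<kappa>\<in>PiE UNIV (\<lambda>_. {..<d}).
        Re (c \<kappa>) * (\<Prod>i\<in>UNIV. (join_vec x w $ i) ^ \<kappa> i))\<bar> = \<bar>Re (F v - iter_approx d \<eta> F js v)\<bar>"
      using agree[OF \<open>x \<in> cube\<close> \<open>w \<in> cube\<close>] by (simp add: v_def)
    also have "\<dots> \<le> cmod (F v - iter_approx d \<eta> F js v)" by (rule abs_Re_le_cmod)
    also have "\<dots> \<le> 3 * (M * contraction_rate \<eta> ^ d / \<eta>) * (\<Sum>k<length js. (6 / \<eta>)^k)"
    proof (rule iter_approx_error[OF cont \<eta> hol S M js(2) v])
      show "\<forall>i\<in>set js. v $ i \<in> of_real ` {-1..1}"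
        using r by (auto simp: v_def cube_def abs_le_iff)
    qed
    finally show "\<bar>f x w - (\<Sum>\<kappa>\<in>PiE UNIV (\<lambda>_. {..<d}).
        Re (c \<kappa>) * (\<Prod>i\<in>UNIV. (join_vec x w $ i) ^ \<kappa> i))\<bar>
      \<le> 3 * (M * contraction_rate \<eta> ^ d / \<eta>) * (\<Sum>k<length js. (6 / \<eta>)^k)" .
  qed
qed

lemma analytic_ext_geometric_approx:
  fixes f :: "real^'n \<Rightarrow> real^'m \<Rightarrow> real"
  assumes "analytic_ext t f"
  obtains C0 q where "0 \<le> C0" "0 < q" "q < 1"
    "\<And>d. 1 \<le> d \<Longrightarrow> cheb_sep_approx f (C0 * q^d) (d ^ CARD('m))"
proof -
  obtain \<eta> S and F :: "complex^('n + 'm) \<Rightarrow> complex"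
    where \<eta>: "0 < \<eta>" "\<eta> \<le> 1" and S: "open S" "convex S" "rect \<eta> \<subseteq> S"
      and cont: "continuous_on (polyrect \<eta>) F"
      and hol: "\<And>v j. v \<in> polyrect \<eta> \<Longrightarrow> (\<lambda>z. F (vec_upd v j z)) holomorphic_on S"
      and agree: "\<And>x w. x \<in> cube \<Longrightarrow> w \<in> cube \<Longrightarrow> F (cemb (join_vec x w)) = of_real (f x w)"
    by (rule analytic_ext_polyrect[OF assms]) (rule that)
  obtain M where M: "\<And>u. u \<in> polyrect \<eta> \<Longrightarrow> cmod (F u) \<le> M"
    using compact_imp_bounded[OF compact_continuous_image[OF cont compact_polyrect]]
    unfolding bounded_iff by auto
  have "(0 :: complex^('n + 'm)) \<in> polyrect \<eta>"
    using \<eta>(1) by (simp add: polyrect_def rect_def)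
  then have "0 \<le> M"
    using M norm_ge_zero order_trans by blast
  obtain js :: "('n + 'm) list" where js: "set js = UNIV" "distinct js"
    using finite_distinct_list[of "UNIV :: ('n + 'm) set"] by auto
  define C0 where "C0 = 3 * (M / \<eta>) * (\<Sum>k<length js. (6 / \<eta>)^k)"
  show ?thesis
  proof
    show "0 \<le> C0" using \<open>0 \<le> M\<close> \<eta>(1) by (simp add: C0_def sum_nonneg)
    show "0 < contraction_rate \<eta>" "contraction_rate \<eta> < 1" by (rule contraction_rate_bounds[OF \<eta>])+
    show "cheb_sep_approx f (C0 * contraction_rate \<eta> ^ d) (d ^ CARD('m))" if "1 \<le> d" for d
      using cheb_sep_approx_of_polyrect_extension[OF \<eta> S cont hol M agree js that]
      by (simp add: C0_def mult_ac)
  qed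
qed

lemma power_le_square_of_ln:
  fixes q eps :: real
  assumes "0 < q" "0 < eps" "2 * ln (1 / eps) \<le> - ln q * real d"
  shows "q ^ d \<le> eps * eps"
proof -
  have "q ^ d = exp (real d * ln q)"
    using assms(1) by (simp add: exp_of_nat_mult)
  also have "\<dots> \<le> exp (- 2 * ln (1 / eps))" using assms(3) by (simp add: mult.commute)
  also have "\<dots> = exp (ln eps + ln eps)"
    using assms(2) by (simp add: ln_div)
  also have "\<dots> = eps * eps"
    using assms(2) by (simp only: exp_add exp_ln)
  finally show ?thesis .
qed

lemma geometric_error_log_rank:
  fixes C0 q :: real and k :: nat
  assumes "0 \<le> C0" "0 < q" "q < 1"
  obtains C eps0 where "0 < eps0"
    "\<And>eps. 0 < eps \<Longrightarrow> eps < eps0 \<Longrightarrow> \<exists>d\<ge>1. C0 * q^d \<le> eps \<and> real (d ^ k) \<le> C * ln (1 / eps) ^ k"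
proof
  define \<rho> where "\<rho> = - ln q"
  have "0 < \<rho>" using assms(2,3) by (simp add: \<rho>_def)
  define C1 where "C1 = max C0 1"
  show "0 < min (exp (-1)) (1 / C1)" by (simp add: C1_def)
  fix eps :: real assume "0 < eps" "eps < min (exp (-1)) (1 / C1)"
  define L where "L = ln (1 / eps)"
  have "ln eps < ln (exp (-1))"
    using \<open>0 < eps\<close> \<open>eps < _\<close> by (subst ln_less_cancel_iff) auto
  then have "1 \<le> L" using \<open>0 < eps\<close> by (simp add: L_def ln_div)
  define d where "d = nat \<lceil>2 * L / \<rho>\<rceil>"
  have "2 * L / \<rho> \<le> real d" unfolding d_def by (rule real_nat_ceiling_ge)
  then have "2 * L \<le> \<rho> * real d"
    using \<open>0 < \<rho>\<close> by (simp add: field_simps)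
  have "0 < 2 * L / \<rho>" using \<open>1 \<le> L\<close> \<open>0 < \<rho>\<close> by simp
  then have "1 \<le> d" using \<open>2 * L / \<rho> \<le> real d\<close> by linarith
  have "q ^ d \<le> eps * eps"
    using power_le_square_of_ln[OF assms(2) \<open>0 < eps\<close>] \<open>2 * L \<le> \<rho> * real d\<close>
    by (simp add: L_def \<rho>_def)
  have "1 \<le> C1" "C0 \<le> C1" by (simp_all add: C1_def)
  have "C1 * eps \<le> 1"
    using \<open>eps < _\<close> \<open>1 \<le> C1\<close> by (simp add: field_simps)
  have "C0 * q ^ d \<le> C1 * (eps * eps)"
    using assms(1,2) \<open>q ^ d \<le> _\<close> \<open>C0 \<le> C1\<close> by (intro mult_mono) auto
  also have "\<dots> \<le> 1 * eps"
    using \<open>C1 * eps \<le> 1\<close> \<open>0 < eps\<close>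
    by (simp only: mult.assoc[symmetric]) (rule mult_right_mono, auto)
  finally have "C0 * q ^ d \<le> eps" by simp
  have "real d \<le> 2 * L / \<rho> + 1"
    unfolding d_def using \<open>0 < 2 * L / \<rho>\<close> by (simp add: of_nat_nat)
  also have "\<dots> \<le> (2 / \<rho> + 1) * L" using \<open>1 \<le> L\<close> by (simp add: distrib_right)
  finally have "real d ^ k \<le> ((2 / \<rho> + 1) * L) ^ k" by (intro power_mono) auto
  then have "real (d ^ k) \<le> (2 / \<rho> + 1) ^ k * L ^ k" by (simp add: power_mult_distrib)
  then show "\<exists>d\<ge>1. C0 * q^d \<le> eps \<and> real (d ^ k) \<le> (2 / \<rho> + 1) ^ k * ln (1 / eps) ^ k"
    using \<open>1 \<le> d\<close> \<open>C0 * q ^ d \<le> eps\<close> by (auto simp: L_def)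
qed

theorem theorem2:
  fixes f :: "real^'n \<Rightarrow> real^'m \<Rightarrow> real" and t :: real
  assumes "t > 0"
    and "analytic_ext t f"
  shows "(\<forall>eps>0. \<exists>h. cheb_sep_approx f eps h) \<and>
         (\<exists>C eps0. eps0 > 0 \<and>
            (\<forall>eps. 0 < eps \<and> eps < eps0 \<longrightarrow>
               (\<exists>h. cheb_sep_approx f eps h \<and> real h \<le> C * (ln (1 / eps)) ^ CARD('m))))"
proof -
  obtain C0 q where "0 \<le> C0" "0 < q" "q < 1"
    and approx: "\<And>d. 1 \<le> d \<Longrightarrow> cheb_sep_approx f (C0 * q^d) (d ^ CARD('m))"
    using analytic_ext_geometric_approx[OF assms(2)] by blast
  obtain C eps0 where "0 < eps0" and rate: "\<And>eps. 0 < eps \<Longrightarrow> eps < eps0 \<Longrightarrow>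
      \<exists>d\<ge>1. C0 * q^d \<le> eps \<and> real (d ^ CARD('m)) \<le> C * ln (1 / eps) ^ CARD('m)"
    using geometric_error_log_rank[OF \<open>0 \<le> C0\<close> \<open>0 < q\<close> \<open>q < 1\<close>] by blast
  have small: "\<exists>h. cheb_sep_approx f eps h \<and> real h \<le> C * ln (1 / eps) ^ CARD('m)"
    if "0 < eps" "eps < eps0" for eps
    using rate[OF that] approx cheb_sep_approx_mono by blast
  have "\<exists>h. cheb_sep_approx f eps h" if "0 < eps" for eps
  proof -
    have "0 < min eps (eps0 / 2)" "min eps (eps0 / 2) < eps0"
      using \<open>0 < eps\<close> \<open>0 < eps0\<close> by auto
    then obtain h where "cheb_sep_approx f (min eps (eps0 / 2)) h"
      using small by blast
    then show ?thesis using cheb_sep_approx_mono min.cobounded1 by blast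
  qed
  then show ?thesis using \<open>0 < eps0\<close> small by blast
qed

end
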